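(* Let $m\ge2$, $\lambda\in\mathbb{D}$, $\mathcal{D}=\{d_1,\ldots,d_m\}\subset\mathbb{C}$, and let $E=\{\sum_{n=0}^\infty a_n\lambda^n:a_n\in\mathcal{D}\}$ be the attractor of the IFS $\{f_j(z)=\lambda z+d_j\}_{j=1}^m$. Assume $E$ is connected and the overlap set $\mathcal{O}=\bigcup_{i\ne j}(E_i\cap E_j)$, $E_j=f_j(E)$, is finite. Suppose in addition there exists $C_1>0$ such that for all sufficiently large $n\in\mathbb{N}$: whenever $f\in\mathcal{F}$, $g\in\mathcal{B}$ and $|f\wedge g|=n$, then $|g(\lambda)|\ge C_1|\lambda|^n$. Then $E$ has bounded turning.
   Context: $\mathcal{B}$ is the set of power series $f(z)=\sum_{n\ge0}c_nz^n$ with $c_n\in\mathcal{D}-\mathcal{D}=\{d_i-d_j\}$ for all $n$ and $c_0\ne0$; $\mathcal{F}=\{f\in\mathcal{B}:f(\lambda)=0\}$. For power series $f,g$, $|f\wedge g|=\min\{k\ge0: f^{(k+1)}(0)\ne g^{(k+1)}(0)\}$ (the degree of their maximal common initial part). A connected set $X\subset\mathbb{C}$ has bounded turning if there is $L$ such that for all $z_0,z_1\in X$ there is a connected set $[z_0,z_1]\subset X$ containing $z_0,z_1$ with $\operatorname{diam}[z_0,z_1]\le L|z_0-z_1|$. *)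

theory Defs
  imports "HOL-Analysis.Analysis" "HOL-Library.Extended_Nat"
begin

definition attractor :: "complex \<Rightarrow> complex set \<Rightarrow> complex set" where
  "attractor lam D = {(\<Sum>n. a n * lam ^ n) | a. \<forall>n. a n \<in> D}"

definition piece :: "complex \<Rightarrow> complex set \<Rightarrow> complex \<Rightarrow> complex set" where
  "piece lam D d = (\<lambda>z. lam * z + d) ` attractor lam D"

definition overlap_set :: "complex \<Rightarrow> complex set \<Rightarrow> complex set" where
  "overlap_set lam D = (\<Union>d\<in>D. \<Union>d'\<in>D - {d}. piece lam D d \<inter> piece lam D d')"

text \<open>Power series are represented by their coefficient sequences.
  The class B: coefficients in D - D, nonzero constant term.\<close>
definition classB :: "complex set \<Rightarrow> (nat \<Rightarrow> complex) set" where
  "classB D = {c. (\<forall>n. c n \<in> {x - y | x y. x \<in> D \<and> y \<in> D}) \<and> c 0 \<noteq> 0}"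

definition ps_eval :: "(nat \<Rightarrow> complex) \<Rightarrow> complex \<Rightarrow> complex" where
  "ps_eval c z = (\<Sum>n. c n * z ^ n)"

definition classF :: "complex \<Rightarrow> complex set \<Rightarrow> (nat \<Rightarrow> complex) set" where
  "classF lam D = {c \<in> classB D. ps_eval c lam = 0}"

text \<open>|f \<and> g| = min{k \<ge> 0 : f^(k+1)(0) \<noteq> g^(k+1)(0)}; since f^(k+1)(0) = (k+1)! c_(k+1),
  this is the least k with c_(k+1) \<noteq> c'_(k+1); infinity if no such k exists.\<close>
definition common_deg :: "(nat \<Rightarrow> complex) \<Rightarrow> (nat \<Rightarrow> complex) \<Rightarrow> enat" where
  "common_deg c c' = (if \<exists>k. c (Suc k) \<noteq> c' (Suc k)
     then enat (LEAST k. c (Suc k) \<noteq> c' (Suc k)) else \<infinity>)"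

definition bounded_turning :: "complex set \<Rightarrow> bool" where
  "bounded_turning X \<longleftrightarrow> connected X \<and>
     (\<exists>L. \<forall>z0\<in>X. \<forall>z1\<in>X. \<exists>C. C \<subseteq> X \<and> connected C \<and> z0 \<in> C \<and> z1 \<in> C \<and>
        diameter C \<le> L * dist z0 z1)"

end

theory Submission
  imports Defs
begin

text \<open>Every point of E is \<pi>(a) = \<Sum> a_n \<lambda>^n for a digit sequence a. Suppose a, b have different
  first digits and their cylinders of level L meet while those of level L+1 do not. Then
  |\<pi>(a) - \<pi>(b)| \<ge> c |\<lambda>|^L: for L below the threshold of the hypothesis this is the positive
  separation of the finitely many disjoint pairs of compact cylinders of a fixed level; above it,
  the hypothesis applies to g = a - b and to f = \<alpha> - \<beta>, where \<alpha>, \<beta> code a common point of the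
  two level-L cylinders and |f \<and> g| = L - 1 because the cylinders of level L+1 are disjoint.
  The union of the two level-L cylinders is a connected set of diameter at most 2 |\<lambda>|^L diam E
  joining \<pi>(a) and \<pi>(b), and self-similarity reduces arbitrary pairs of codes to this case.\<close>

lemma diameter_Un_le:
  fixes A B :: "'a::real_normed_vector set"
  assumes "bounded A" "bounded B" "A \<inter> B \<noteq> {}"
  shows "diameter (A \<union> B) \<le> diameter A + diameter B"
proof (rule diameter_le)
  obtain z where z: "z \<in> A" "z \<in> B" using assms(3) by blast
  have dA: "0 \<le> diameter A" and dB: "0 \<le> diameter B"
    using assms(1,2) by (simp_all add: diameter_ge_0)
  then show "A \<union> B \<noteq> {} \<or> 0 \<le> diameter A + diameter B" by simp
  have in_A: "dist x y \<le> diameter A" if "x \<in> A" "y \<in> A" for x y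
    using assms(1) that by (rule diameter_bounded_bound)
  have in_B: "dist x y \<le> diameter B" if "x \<in> B" "y \<in> B" for x y
    using assms(2) that by (rule diameter_bounded_bound)
  fix x y assume "x \<in> A \<union> B" "y \<in> A \<union> B"
  then consider "x \<in> A" "y \<in> A" | "x \<in> B" "y \<in> B" | "x \<in> A" "y \<in> B" | "x \<in> B" "y \<in> A"
    by blast
  then have "dist x y \<le> diameter A + diameter B"
  proof cases
    case 3
    then show ?thesis
      using dist_triangle[of x y z] in_A[of x z] in_B[of z y] z by (simp add: dist_commute)
  next
    case 4
    then show ?thesis
      using dist_triangle[of x y z] in_B[of x z] in_A[of z y] z by (simp add: dist_commute)
  qed (use dA dB in_A in_B in fastforce)+
  then show "norm (x - y) \<le> diameter A + diameter B" by (simp add: dist_norm)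
qed

lemma diameter_image_le:
  fixes f :: "'a::metric_space \<Rightarrow> 'b::real_normed_vector"
  assumes "bounded S" "0 \<le> k" "\<And>x y. x \<in> S \<Longrightarrow> y \<in> S \<Longrightarrow> dist (f x) (f y) \<le> k * dist x y"
  shows "diameter (f ` S) \<le> k * diameter S"
proof (rule diameter_le)
  show "f ` S \<noteq> {} \<or> 0 \<le> k * diameter S"
    using assms(1,2) by (simp add: diameter_ge_0)
  fix u v assume "u \<in> f ` S" "v \<in> f ` S"
  then obtain x y where "x \<in> S" "y \<in> S" "u = f x" "v = f y" by blast
  then have "norm (u - v) \<le> k * dist x y" using assms(3) by (simp add: dist_norm)
  also have "\<dots> \<le> k * diameter S"
    using assms(1,2) \<open>x \<in> S\<close> \<open>y \<in> S\<close> by (simp add: diameter_bounded_bound mult_left_mono)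
  finally show "norm (u - v) \<le> k * diameter S" .
qed

lemma finite_compact_family_separated:
  fixes F :: "'a::metric_space set set"
  assumes "finite F" "\<And>A. A \<in> F \<Longrightarrow> compact A \<and> A \<noteq> {}"
  obtains \<delta> where "\<delta> > 0" "\<And>A B. A \<in> F \<Longrightarrow> B \<in> F \<Longrightarrow> A \<inter> B = {} \<Longrightarrow> \<delta> \<le> setdist A B"
proof -
  define dists where "dists = (\<lambda>(A, B). setdist A B) ` {(A, B) \<in> F \<times> F. A \<inter> B = {}}"
  have "finite {(A, B) \<in> F \<times> F. A \<inter> B = {}}"
    by (rule finite_subset[of _ "F \<times> F"]) (use assms(1) in auto)
  then have "finite dists" unfolding dists_def by simp
  moreover have "0 < s" if "s \<in> dists" for s
    using that assms(2) by (auto simp: dists_def setdist_gt_0_compact_closed compact_imp_closed)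
  ultimately have "0 < Min (insert 1 dists)" by simp
  moreover have "Min (insert 1 dists) \<le> setdist A B" if "A \<in> F" "B \<in> F" "A \<inter> B = {}" for A B
    using that \<open>finite dists\<close> by (intro Min_le) (auto simp: dists_def)
  ultimately show thesis using that by blast
qed

lemma ps_eval_split:
  assumes "summable (\<lambda>n. c n * z ^ n)" "summable (\<lambda>n. c (n + k) * z ^ n)"
  shows "ps_eval c z = (\<Sum>i<k. c i * z ^ i) + z ^ k * ps_eval (\<lambda>i. c (i + k)) z"
proof -
  have "ps_eval c z = (\<Sum>i. c (i + k) * z ^ (i + k)) + (\<Sum>i<k. c i * z ^ i)"
    unfolding ps_eval_def using assms(1) by (rule suminf_split_initial_segment)
  also have "(\<Sum>i. c (i + k) * z ^ (i + k)) = (\<Sum>i. z ^ k * (c (i + k) * z ^ i))"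
    by (simp add: power_add mult_ac)
  also have "\<dots> = z ^ k * ps_eval (\<lambda>i. c (i + k)) z"
    unfolding ps_eval_def using assms(2) by (rule suminf_mult)
  finally show ?thesis by simp
qed

lemma ps_eval_diff:
  assumes "summable (\<lambda>n. c n * z ^ n)" "summable (\<lambda>n. d n * z ^ n)"
  shows "ps_eval (\<lambda>n. c n - d n) z = ps_eval c z - ps_eval d z"
  unfolding ps_eval_def using suminf_diff[OF assms] by (simp add: left_diff_distrib)

lemma common_deg_eqI:
  assumes "f (Suc k) \<noteq> g (Suc k)" "\<And>i. i < k \<Longrightarrow> f (Suc i) = g (Suc i)"
  shows "common_deg f g = enat k"
proof -
  have "(LEAST i. f (Suc i) \<noteq> g (Suc i)) = k"
    using assms by (intro Least_equality) (auto simp: not_less[symmetric])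
  then show ?thesis using assms(1) by (auto simp: common_deg_def)
qed

definition digit_seqs :: "'a set \<Rightarrow> (nat \<Rightarrow> 'a) set" where
  "digit_seqs D = {a. \<forall>n. a n \<in> D}"

lemma mem_digit_seqs [simp]: "a \<in> digit_seqs D \<longleftrightarrow> (\<forall>n. a n \<in> D)"
  by (simp add: digit_seqs_def)

lemma compact_digit_seqs:
  fixes D :: "'a::topological_space set"
  assumes "compact D"
  shows "compact (digit_seqs D)"
proof -
  have "digit_seqs D = PiE UNIV (\<lambda>_. D)" by (auto simp: PiE_def Pi_def)
  moreover have "compactin (product_topology (\<lambda>_. euclidean) UNIV) (PiE UNIV (\<lambda>_. D))"
    using assms by (simp add: compactin_PiE)
  ultimately show ?thesis by (simp add: euclidean_product_topology)
qed

lemma digit_diff_in_classB: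
  assumes "a \<in> digit_seqs D" "b \<in> digit_seqs D" "a 0 \<noteq> b 0"
  shows "(\<lambda>n. a n - b n) \<in> classB D"
  using assms by (auto simp: classB_def)

locale digit_ifs =
  fixes lam :: complex and D :: "complex set"
  assumes norm_lam_less_1: "norm lam < 1"
    and finite_digits: "finite D"
    and digits_nonempty: "D \<noteq> {}"
begin

abbreviation E where "E \<equiv> attractor lam D"

lemma digit_terms_bounded:
  obtains M where "\<And>a n. a \<in> digit_seqs D \<Longrightarrow> norm (a n * lam ^ n) \<le> M * norm lam ^ n"
    and "summable (\<lambda>n. M * norm lam ^ n)"
proof -
  obtain M where M: "\<And>d. d \<in> D \<Longrightarrow> norm d \<le> M"
    using finite_imp_bounded[OF finite_digits] by (auto simp: bounded_iff)
  have "norm (a n * lam ^ n) \<le> M * norm lam ^ n" if "a \<in> digit_seqs D" for a n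
    using M[of "a n"] that by (simp add: norm_mult norm_power mult_right_mono)
  moreover have "summable (\<lambda>n. M * norm lam ^ n)"
    using norm_lam_less_1 by (intro summable_mult summable_geometric) simp
  ultimately show thesis using that by blast
qed

lemma summable_digit_series:
  assumes "a \<in> digit_seqs D"
  shows "summable (\<lambda>n. a n * lam ^ n)"
proof -
  obtain M where M: "\<And>a n. a \<in> digit_seqs D \<Longrightarrow> norm (a n * lam ^ n) \<le> M * norm lam ^ n"
    and "summable (\<lambda>n. M * norm lam ^ n)"
    using digit_terms_bounded by metis
  then show ?thesis
    using summable_comparison_test'[of "\<lambda>n. M * norm lam ^ n" 0 "\<lambda>n. a n * lam ^ n"] M[OF assms]
    by blast
qed

lemma ps_eval_digit_diff:
  assumes "a \<in> digit_seqs D" "b \<in> digit_seqs D"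
  shows "ps_eval (\<lambda>n. a n - b n) lam = ps_eval a lam - ps_eval b lam"
  using assms by (intro ps_eval_diff summable_digit_series)

lemma attractor_eq_image: "E = (\<lambda>a. ps_eval a lam) ` digit_seqs D"
  unfolding attractor_def ps_eval_def by auto

lemma continuous_on_ps_eval: "continuous_on (digit_seqs D) (\<lambda>a. ps_eval a lam)"
proof (rule uniform_limit_theorem)
  obtain M where M: "\<And>a n. a \<in> digit_seqs D \<Longrightarrow> norm (a n * lam ^ n) \<le> M * norm lam ^ n"
    and "summable (\<lambda>n. M * norm lam ^ n)"
    using digit_terms_bounded by metis
  then show "uniform_limit (digit_seqs D) (\<lambda>n a. \<Sum>i<n. a i * lam ^ i) (\<lambda>a. ps_eval a lam) sequentially"
    unfolding ps_eval_def by (intro Weierstrass_m_test[where M = "\<lambda>n. M * norm lam ^ n"])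
  have "continuous_on (digit_seqs D) (\<lambda>a. a i)" for i
    by (rule continuous_on_subset[OF continuous_on_product_coordinates]) simp
  then show "\<forall>\<^sub>F n in sequentially. continuous_on (digit_seqs D) (\<lambda>a. \<Sum>i<n. a i * lam ^ i)"
    by (intro always_eventually allI continuous_on_sum continuous_on_mult_right)
qed simp

lemma compact_attractor: "compact E"
  unfolding attractor_eq_image using finite_digits
  by (intro compact_continuous_image continuous_on_ps_eval compact_digit_seqs finite_imp_compact)

lemma diameter_attractor_nonneg: "0 \<le> diameter E"
  by (intro diameter_ge_0 compact_imp_bounded compact_attractor)

lemma attractor_nonempty: "E \<noteq> {}"
  unfolding attractor_eq_image using digits_nonempty by auto

text \<open>The composition f_{a_0} \<circ> \<dots> \<circ> f_{a_{j-1}} of the maps of the IFS.\<close>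
definition prefix_map :: "(nat \<Rightarrow> complex) \<Rightarrow> nat \<Rightarrow> complex \<Rightarrow> complex" where
  "prefix_map a j z = (\<Sum>i<j. a i * lam ^ i) + lam ^ j * z"

lemma prefix_map_cong: "(\<And>i. i < j \<Longrightarrow> a i = b i) \<Longrightarrow> prefix_map a j = prefix_map b j"
  unfolding prefix_map_def by (intro ext arg_cong2[where f = "(+)"] sum.cong) auto

lemma dist_prefix_map: "dist (prefix_map a j z) (prefix_map a j w) = norm lam ^ j * dist z w"
  by (simp add: prefix_map_def dist_norm norm_mult norm_power flip: right_diff_distrib)

lemma ps_eval_prefix_map:
  assumes "a \<in> digit_seqs D"
  shows "ps_eval a lam = prefix_map a j (ps_eval (\<lambda>i. a (i + j)) lam)"
  unfolding prefix_map_def using assms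
  by (intro ps_eval_split summable_digit_series) auto

definition cylinder :: "(nat \<Rightarrow> complex) \<Rightarrow> nat \<Rightarrow> complex set" where
  "cylinder a n = {ps_eval x lam | x. x \<in> digit_seqs D \<and> (\<forall>i<n. x i = a i)}"

lemma cylinder_0 [simp]: "cylinder a 0 = E"
  unfolding cylinder_def attractor_eq_image by auto

lemma cylinder_subset_attractor: "cylinder a n \<subseteq> E"
  unfolding cylinder_def attractor_eq_image by auto

lemma ps_eval_in_cylinder: "a \<in> digit_seqs D \<Longrightarrow> ps_eval a lam \<in> cylinder a n"
  unfolding cylinder_def by blast

lemma cylinder_antimono: "m \<le> n \<Longrightarrow> cylinder a n \<subseteq> cylinder a m"
  unfolding cylinder_def by force

lemma cylinder_add:
  assumes a: "a \<in> digit_seqs D"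
  shows "cylinder a (j + n) = prefix_map a j ` cylinder (\<lambda>i. a (i + j)) n"
proof
  show "cylinder a (j + n) \<subseteq> prefix_map a j ` cylinder (\<lambda>i. a (i + j)) n"
  proof
    fix w assume "w \<in> cylinder a (j + n)"
    then obtain x where x: "x \<in> digit_seqs D" "\<forall>i<j + n. x i = a i" "w = ps_eval x lam"
      unfolding cylinder_def by blast
    have "prefix_map x j = prefix_map a j" using x(2) by (intro prefix_map_cong) simp
    then have "w = prefix_map a j (ps_eval (\<lambda>i. x (i + j)) lam)"
      using ps_eval_prefix_map[OF x(1), of j] x(3) by simp
    moreover have "ps_eval (\<lambda>i. x (i + j)) lam \<in> cylinder (\<lambda>i. a (i + j)) n"
      using x(1,2) unfolding cylinder_def by force
    ultimately show "w \<in> prefix_map a j ` cylinder (\<lambda>i. a (i + j)) n" by blast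
  qed
  show "prefix_map a j ` cylinder (\<lambda>i. a (i + j)) n \<subseteq> cylinder a (j + n)"
  proof
    fix w assume "w \<in> prefix_map a j ` cylinder (\<lambda>i. a (i + j)) n"
    then obtain y where y: "y \<in> digit_seqs D" "\<forall>i<n. y i = a (i + j)"
      "w = prefix_map a j (ps_eval y lam)"
      unfolding cylinder_def by blast
    define x where "x = (\<lambda>i. if i < j then a i else y (i - j))"
    have x: "x \<in> digit_seqs D" using a y(1) by (simp add: x_def)
    have "prefix_map x j = prefix_map a j" by (intro prefix_map_cong) (simp add: x_def)
    then have "w = ps_eval x lam"
      using ps_eval_prefix_map[OF x, of j] y(3) by (simp add: x_def)
    moreover have "\<forall>i<j + n. x i = a i"
      using y(2) by (auto simp: x_def dest: spec[of _ "_ - j"])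
    ultimately show "w \<in> cylinder a (j + n)" using x unfolding cylinder_def by blast
  qed
qed

lemma cylinder_eq_image: "a \<in> digit_seqs D \<Longrightarrow> cylinder a n = prefix_map a n ` E"
  using cylinder_add[of a n 0] by simp

lemma prefix_map_image_subset: "a \<in> digit_seqs D \<Longrightarrow> prefix_map a j ` E \<subseteq> E"
  using cylinder_eq_image cylinder_subset_attractor by blast

lemma compact_cylinder: "a \<in> digit_seqs D \<Longrightarrow> compact (cylinder a n)"
  unfolding cylinder_eq_image prefix_map_def
  by (intro compact_continuous_image compact_attractor continuous_intros)

lemma connected_cylinder: "connected E \<Longrightarrow> a \<in> digit_seqs D \<Longrightarrow> connected (cylinder a n)"
  unfolding cylinder_eq_image prefix_map_def
  by (intro connected_continuous_image continuous_intros)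

lemma diameter_prefix_map_image:
  "bounded S \<Longrightarrow> diameter (prefix_map a j ` S) \<le> norm lam ^ j * diameter S"
  by (intro diameter_image_le) (simp_all add: dist_prefix_map)

lemma diameter_overlapping_cylinders:
  assumes "a \<in> digit_seqs D" "b \<in> digit_seqs D" "cylinder a n \<inter> cylinder b n \<noteq> {}"
  shows "diameter (cylinder a n \<union> cylinder b n) \<le> 2 * norm lam ^ n * diameter E"
proof -
  have bound: "diameter (cylinder c n) \<le> norm lam ^ n * diameter E" if "c \<in> digit_seqs D" for c
    unfolding cylinder_eq_image[OF that]
    by (intro diameter_prefix_map_image compact_imp_bounded compact_attractor)
  have "diameter (cylinder a n) + diameter (cylinder b n) \<le> 2 * norm lam ^ n * diameter E"
    using bound[OF assms(1)] bound[OF assms(2)] by linarith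
  moreover have
    "diameter (cylinder a n \<union> cylinder b n) \<le> diameter (cylinder a n) + diameter (cylinder b n)"
    using assms by (intro diameter_Un_le compact_imp_bounded compact_cylinder)
  ultimately show ?thesis by linarith
qed

lemma last_overlap_exists:
  assumes a: "a \<in> digit_seqs D" and b: "b \<in> digit_seqs D"
    and ne: "ps_eval a lam \<noteq> ps_eval b lam"
  obtains L where "cylinder a L \<inter> cylinder b L \<noteq> {}"
    and "cylinder a (Suc L) \<inter> cylinder b (Suc L) = {}"
proof -
  let ?d = "dist (ps_eval a lam) (ps_eval b lam)"
  obtain n where n: "norm lam ^ n * (2 * diameter E + 1) < ?d"
    using real_arch_pow_inv[of "?d / (2 * diameter E + 1)" "norm lam"] ne norm_lam_less_1
      diameter_attractor_nonneg
    by (auto simp: field_simps)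
  have "cylinder a n \<inter> cylinder b n = {}"
  proof (rule ccontr)
    assume overlap: "cylinder a n \<inter> cylinder b n \<noteq> {}"
    have "?d \<le> diameter (cylinder a n \<union> cylinder b n)"
      using a b by (intro diameter_bounded_bound bounded_Un[THEN iffD2] conjI
          compact_imp_bounded compact_cylinder) (auto intro: ps_eval_in_cylinder)
    also have "\<dots> \<le> 2 * norm lam ^ n * diameter E"
      using diameter_overlapping_cylinders[OF a b overlap] .
    also have "\<dots> \<le> norm lam ^ n * (2 * diameter E + 1)" by (simp add: field_simps)
    finally show False using n by simp
  qed
  moreover have "\<not> (cylinder a 0 \<inter> cylinder b 0 = {})" using attractor_nonempty by simp
  ultimately show thesis
    using exists_least_lemma[of "\<lambda>L. cylinder a L \<inter> cylinder b L = {}"] that by blast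
qed

lemma cylinders_separated:
  obtains \<delta> where "\<delta> > 0"
    and "\<And>a b. a \<in> digit_seqs D \<Longrightarrow> b \<in> digit_seqs D \<Longrightarrow> cylinder a n \<inter> cylinder b n = {} \<Longrightarrow>
      \<delta> \<le> dist (ps_eval a lam) (ps_eval b lam)"
proof -
  let ?F = "(\<lambda>a. cylinder a n) ` digit_seqs D"
  have "?F \<subseteq> (\<lambda>w. cylinder w n) ` PiE {..<n} (\<lambda>_. D)"
  proof
    fix A assume "A \<in> ?F"
    then obtain a where "a \<in> digit_seqs D" "A = cylinder a n" by blast
    moreover have "cylinder a n = cylinder (restrict a {..<n}) n"
      unfolding cylinder_def by auto
    ultimately show "A \<in> (\<lambda>w. cylinder w n) ` PiE {..<n} (\<lambda>_. D)"
      by (intro image_eqI[of _ _ "restrict a {..<n}"]) auto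
  qed
  then have "finite ?F"
    by (rule finite_subset) (use finite_digits in \<open>simp add: finite_PiE\<close>)
  moreover have "compact A \<and> A \<noteq> {}" if "A \<in> ?F" for A
    using that compact_cylinder ps_eval_in_cylinder by blast
  ultimately show thesis
  proof (rule finite_compact_family_separated)
    fix \<delta> assume "\<delta> > 0"
      and \<delta>: "\<And>A B. A \<in> ?F \<Longrightarrow> B \<in> ?F \<Longrightarrow> A \<inter> B = {} \<Longrightarrow> \<delta> \<le> setdist A B"
    show thesis
    proof (rule that[OF \<open>\<delta> > 0\<close>])
      fix a b assume a: "a \<in> digit_seqs D" and b: "b \<in> digit_seqs D"
        and "cylinder a n \<inter> cylinder b n = {}"
      then have "\<delta> \<le> setdist (cylinder a n) (cylinder b n)" by (intro \<delta>) auto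
      also have "\<dots> \<le> dist (ps_eval a lam) (ps_eval b lam)"
        using a b by (intro setdist_le_dist ps_eval_in_cylinder)
      finally show "\<delta> \<le> dist (ps_eval a lam) (ps_eval b lam)" .
    qed
  qed
qed

lemma last_overlap_classF_witness:
  assumes a: "a \<in> digit_seqs D" and b: "b \<in> digit_seqs D" and "a 0 \<noteq> b 0" "0 < L"
    and overlap: "cylinder a L \<inter> cylinder b L \<noteq> {}"
    and disjoint: "cylinder a (Suc L) \<inter> cylinder b (Suc L) = {}"
  shows "\<exists>f \<in> classF lam D. common_deg f (\<lambda>n. a n - b n) = enat (L - 1)"
proof -
  obtain \<alpha> \<beta> where \<alpha>: "\<alpha> \<in> digit_seqs D" "\<forall>i<L. \<alpha> i = a i"
    and \<beta>: "\<beta> \<in> digit_seqs D" "\<forall>i<L. \<beta> i = b i" and eq: "ps_eval \<alpha> lam = ps_eval \<beta> lam"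
    using overlap unfolding cylinder_def by blast
  define f where "f = (\<lambda>n. \<alpha> n - \<beta> n)"
  have f_below: "f i = a i - b i" if "i < L" for i using that \<alpha>(2) \<beta>(2) by (simp add: f_def)
  have "\<alpha> 0 - \<beta> 0 \<noteq> 0" using f_below[of 0] assms(3,4) by (simp add: f_def)
  then have "f \<in> classF lam D"
    using digit_diff_in_classB[OF \<alpha>(1) \<beta>(1)] eq ps_eval_digit_diff[OF \<alpha>(1) \<beta>(1)]
    by (simp add: classF_def f_def)
  have "f L \<noteq> a L - b L"
  proof
    assume f_L: "f L = a L - b L"
    \<comment> \<open>Replacing the digits up to L by those of a and b keeps the difference f, hence the
      common value, and produces a common point of the cylinders of level L+1.\<close>
    define \<alpha>' where "\<alpha>' = (\<lambda>i. if i \<le> L then a i else \<alpha> i)"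
    define \<beta>' where "\<beta>' = (\<lambda>i. if i \<le> L then b i else \<beta> i)"
    have \<alpha>': "\<alpha>' \<in> digit_seqs D" and \<beta>': "\<beta>' \<in> digit_seqs D"
      using a b \<alpha>(1) \<beta>(1) by (simp_all add: \<alpha>'_def \<beta>'_def)
    have "\<alpha>' n - \<beta>' n = f n" for n
      using f_below[of n] f_L by (cases "n < L") (auto simp: \<alpha>'_def \<beta>'_def f_def)
    then have "ps_eval \<alpha>' lam = ps_eval \<beta>' lam"
      using ps_eval_digit_diff[OF \<alpha>' \<beta>'] ps_eval_digit_diff[OF \<alpha>(1) \<beta>(1)] eq by (simp add: f_def)
    moreover have "\<forall>i<Suc L. \<alpha>' i = a i" "\<forall>i<Suc L. \<beta>' i = b i"
      by (simp_all add: \<alpha>'_def \<beta>'_def)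
    ultimately have "ps_eval \<alpha>' lam \<in> cylinder a (Suc L) \<inter> cylinder b (Suc L)"
      using \<alpha>' \<beta>' unfolding cylinder_def by blast
    then show False using disjoint by blast
  qed
  then have "common_deg f (\<lambda>n. a n - b n) = enat (L - 1)"
    using \<open>0 < L\<close> f_below by (intro common_deg_eqI) simp_all
  with \<open>f \<in> classF lam D\<close> show ?thesis by blast
qed

lemma separation_at_last_overlap:
  assumes "C1 > 0"
    and H: "\<forall>n \<ge> N. \<forall>f \<in> classF lam D. \<forall>g \<in> classB D.
      common_deg f g = enat n \<longrightarrow> norm (ps_eval g lam) \<ge> C1 * norm lam ^ n"
  obtains c where "c > 0"
    and "\<And>a b L. a \<in> digit_seqs D \<Longrightarrow> b \<in> digit_seqs D \<Longrightarrow> a 0 \<noteq> b 0 \<Longrightarrow>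
      cylinder a L \<inter> cylinder b L \<noteq> {} \<Longrightarrow> cylinder a (Suc L) \<inter> cylinder b (Suc L) = {} \<Longrightarrow>
      c * norm lam ^ L \<le> dist (ps_eval a lam) (ps_eval b lam)"
proof -
  obtain \<delta> where "\<delta> > 0" and \<delta>: "\<And>a b. a \<in> digit_seqs D \<Longrightarrow> b \<in> digit_seqs D \<Longrightarrow>
      cylinder a (Suc N) \<inter> cylinder b (Suc N) = {} \<Longrightarrow> \<delta> \<le> dist (ps_eval a lam) (ps_eval b lam)"
    using cylinders_separated by metis
  have "min \<delta> C1 * norm lam ^ L \<le> dist (ps_eval a lam) (ps_eval b lam)"
    if a: "a \<in> digit_seqs D" and b: "b \<in> digit_seqs D" and "a 0 \<noteq> b 0"
      and overlap: "cylinder a L \<inter> cylinder b L \<noteq> {}"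
      and disjoint: "cylinder a (Suc L) \<inter> cylinder b (Suc L) = {}" for a b L
  proof (cases "L \<le> N")
    case True
    then have "cylinder a (Suc N) \<inter> cylinder b (Suc N) = {}"
      using disjoint cylinder_antimono[of "Suc L" "Suc N"] by blast
    then have "\<delta> \<le> dist (ps_eval a lam) (ps_eval b lam)" using \<delta> a b by blast
    moreover have "min \<delta> C1 * norm lam ^ L \<le> min \<delta> C1 * 1"
      using \<open>\<delta> > 0\<close> \<open>C1 > 0\<close> norm_lam_less_1 by (intro mult_left_mono power_le_one) auto
    ultimately show ?thesis using min.cobounded1[of \<delta> C1] by linarith
  next
    case False
    then obtain f where "f \<in> classF lam D" "common_deg f (\<lambda>n. a n - b n) = enat (L - 1)"
      using last_overlap_classF_witness[OF a b \<open>a 0 \<noteq> b 0\<close> _ overlap disjoint] by auto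
    then have "C1 * norm lam ^ (L - 1) \<le> norm (ps_eval (\<lambda>n. a n - b n) lam)"
      using H[rule_format, of "L - 1" f "\<lambda>n. a n - b n"] False
        digit_diff_in_classB[OF a b \<open>a 0 \<noteq> b 0\<close>]
      by simp
    then have "C1 * norm lam ^ (L - 1) \<le> dist (ps_eval a lam) (ps_eval b lam)"
      by (simp add: ps_eval_digit_diff[OF a b] dist_norm)
    moreover have "min \<delta> C1 * norm lam ^ L \<le> C1 * norm lam ^ (L - 1)"
      using \<open>C1 > 0\<close> norm_lam_less_1
      by (intro mult_mono power_decreasing) auto
    ultimately show ?thesis by linarith
  qed
  moreover have "0 < min \<delta> C1" using \<open>\<delta> > 0\<close> \<open>C1 > 0\<close> by simp
  ultimately show thesis by (rule that[rotated])
qed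

end

locale separated_digit_ifs = digit_ifs +
  fixes c :: real
  assumes separation_pos: "c > 0"
    and separation: "\<And>a b L. a \<in> digit_seqs D \<Longrightarrow> b \<in> digit_seqs D \<Longrightarrow> a 0 \<noteq> b 0 \<Longrightarrow>
      cylinder a L \<inter> cylinder b L \<noteq> {} \<Longrightarrow> cylinder a (Suc L) \<inter> cylinder b (Suc L) = {} \<Longrightarrow>
      c * norm lam ^ L \<le> dist (ps_eval a lam) (ps_eval b lam)"
begin

lemma ex_joining_set_first_digits_differ:
  assumes "connected E" and a: "a \<in> digit_seqs D" and b: "b \<in> digit_seqs D"
    and "a 0 \<noteq> b 0" "ps_eval a lam \<noteq> ps_eval b lam"
  shows "\<exists>T \<subseteq> E. connected T \<and> ps_eval a lam \<in> T \<and> ps_eval b lam \<in> T \<and>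
    diameter T \<le> 2 * diameter E / c * dist (ps_eval a lam) (ps_eval b lam)"
proof -
  obtain L where overlap: "cylinder a L \<inter> cylinder b L \<noteq> {}"
    and disjoint: "cylinder a (Suc L) \<inter> cylinder b (Suc L) = {}"
    using last_overlap_exists[OF a b \<open>ps_eval a lam \<noteq> ps_eval b lam\<close>] by blast
  define T where "T = cylinder a L \<union> cylinder b L"
  have "connected T"
    unfolding T_def using overlap
    by (intro connected_Un connected_cylinder \<open>connected E\<close> a b)
  moreover have "T \<subseteq> E" unfolding T_def using cylinder_subset_attractor by blast
  moreover have "ps_eval a lam \<in> T" "ps_eval b lam \<in> T"
    unfolding T_def using a b ps_eval_in_cylinder by blast+
  moreover have "diameter T \<le> 2 * diameter E / c * dist (ps_eval a lam) (ps_eval b lam)"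
  proof -
    have "diameter T \<le> 2 * diameter E / c * (c * norm lam ^ L)"
      using diameter_overlapping_cylinders[OF a b overlap] separation_pos
      by (simp add: T_def mult_ac)
    also have "\<dots> \<le> 2 * diameter E / c * dist (ps_eval a lam) (ps_eval b lam)"
      using separation[OF a b \<open>a 0 \<noteq> b 0\<close> overlap disjoint] separation_pos
      by (intro mult_left_mono divide_nonneg_pos) (auto simp: diameter_attractor_nonneg)
    finally show ?thesis .
  qed
  ultimately show ?thesis by blast
qed

lemma ex_joining_set:
  assumes "connected E" and a: "a \<in> digit_seqs D" and b: "b \<in> digit_seqs D"
  shows "\<exists>S \<subseteq> E. connected S \<and> ps_eval a lam \<in> S \<and> ps_eval b lam \<in> S \<and>
    diameter S \<le> 2 * diameter E / c * dist (ps_eval a lam) (ps_eval b lam)"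
proof (cases "ps_eval a lam = ps_eval b lam")
  case True
  then show ?thesis using a b attractor_eq_image by (intro exI[of _ "{ps_eval a lam}"]) auto
next
  case False
  then have "\<exists>i. a i \<noteq> b i" by (metis ext)
  then obtain j where j: "a j \<noteq> b j" "\<And>i. i < j \<Longrightarrow> a i = b i"
    unfolding exists_least_iff[of "\<lambda>i. a i \<noteq> b i"] by blast
  define a' where "a' = (\<lambda>i. a (i + j))"
  define b' where "b' = (\<lambda>i. b (i + j))"
  have a': "a' \<in> digit_seqs D" and b': "b' \<in> digit_seqs D"
    using a b by (simp_all add: a'_def b'_def)
  have pa: "ps_eval a lam = prefix_map a j (ps_eval a' lam)"
    unfolding a'_def by (rule ps_eval_prefix_map[OF a])
  have pb: "ps_eval b lam = prefix_map a j (ps_eval b' lam)"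
    unfolding b'_def using ps_eval_prefix_map[OF b] prefix_map_cong[of j a b] j(2) by simp
  have "a' 0 \<noteq> b' 0" using j(1) by (simp add: a'_def b'_def)
  moreover have "ps_eval a' lam \<noteq> ps_eval b' lam" using False pa pb by auto
  ultimately obtain T
    where T: "T \<subseteq> E" "connected T" "ps_eval a' lam \<in> T" "ps_eval b' lam \<in> T"
      "diameter T \<le> 2 * diameter E / c * dist (ps_eval a' lam) (ps_eval b' lam)"
    using ex_joining_set_first_digits_differ[OF \<open>connected E\<close> a' b'] by blast
  have "prefix_map a j ` T \<subseteq> E" using T(1) prefix_map_image_subset[OF a, of j] by blast
  moreover have "connected (prefix_map a j ` T)"
    using T(2) unfolding prefix_map_def by (intro connected_continuous_image continuous_intros)
  moreover have "diameter (prefix_map a j ` T) \<le> norm lam ^ j * diameter T"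
    using bounded_subset[OF compact_imp_bounded[OF compact_attractor] T(1)]
    by (rule diameter_prefix_map_image)
  moreover have
    "norm lam ^ j * diameter T \<le> 2 * diameter E / c * dist (ps_eval a lam) (ps_eval b lam)"
    using mult_left_mono[OF T(5), of "norm lam ^ j"] by (simp add: pa pb dist_prefix_map mult_ac)
  ultimately show ?thesis using T(3,4) pa pb by (intro exI[of _ "prefix_map a j ` T"]) auto
qed

lemma bounded_turning_attractor:
  assumes "connected E"
  shows "bounded_turning E"
proof -
  have "\<exists>S \<subseteq> E. connected S \<and> z \<in> S \<and> w \<in> S \<and> diameter S \<le> 2 * diameter E / c * dist z w"
    if z: "z \<in> E" and w: "w \<in> E" for z w
  proof -
    obtain a b where "a \<in> digit_seqs D" "b \<in> digit_seqs D" "z = ps_eval a lam" "w = ps_eval b lam"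
      using z w unfolding attractor_eq_image by blast
    then show ?thesis using ex_joining_set[OF assms] by simp
  qed
  then show ?thesis
    unfolding bounded_turning_def using assms by (intro conjI exI[of _ "2 * diameter E / c"] ballI)
qed

end

context digit_ifs
begin

lemma bounded_turning_if_common_deg_bound:
  assumes "connected E" "C1 > 0"
    and "\<forall>n \<ge> N. \<forall>f \<in> classF lam D. \<forall>g \<in> classB D.
      common_deg f g = enat n \<longrightarrow> norm (ps_eval g lam) \<ge> C1 * norm lam ^ n"
  shows "bounded_turning E"
proof -
  have "\<exists>c. separated_digit_ifs_axioms lam D c"
    unfolding separated_digit_ifs_axioms_def
    by (rule separation_at_last_overlap[OF assms(2,3)]) (intro exI conjI allI impI; assumption)
  then obtain c where "separated_digit_ifs_axioms lam D c" ..
  then interpret separated_digit_ifs lam D c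
    by (rule separated_digit_ifs.intro[OF digit_ifs_axioms])
  show ?thesis using assms(1) by (rule bounded_turning_attractor)
qed

end

theorem theorem6p1:
  fixes m :: nat and lam :: complex and D :: "complex set"
  assumes "m \<ge> 2"
    and "norm lam < 1"
    and "finite D" and "card D = m"
    and "connected (attractor lam D)"
    and "finite (overlap_set lam D)"
    and "\<exists>C1 > 0. \<exists>N. \<forall>n \<ge> N. \<forall>f \<in> classF lam D. \<forall>g \<in> classB D.
           common_deg f g = enat n \<longrightarrow> norm (ps_eval g lam) \<ge> C1 * norm lam ^ n"
  shows "bounded_turning (attractor lam D)"
proof -
  have "D \<noteq> {}" using assms(1,4) by auto
  with assms(2,3) interpret digit_ifs lam D by unfold_locales
  obtain C1 N where "C1 > 0" "\<forall>n \<ge> N. \<forall>f \<in> classF lam D. \<forall>g \<in> classB D.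
      common_deg f g = enat n \<longrightarrow> norm (ps_eval g lam) \<ge> C1 * norm lam ^ n"
    using assms(7) by blast
  with assms(5) show ?thesis by (rule bounded_turning_if_common_deg_bound)
qed

end
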